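(* Let $k\ge1$ (possibly $k=\infty$), let $n_i$ ($1\le i\le k$) be positive integers, and let $\mathbb F_\theta^+$ be the single-vertex $k$-graph underlying the standard product of the odometers $\{(\mathbb Z,[n_i])\}_{i=1}^k$. The following are equivalent: (1) the $n_i$ are pairwise coprime; (2) for all $1\le i<j\le k$ and $(\mathfrak s,\mathfrak t')\in[n_i]\times[n_j]$ there is a unique $(\mathfrak s',\mathfrak t)\in[n_i]\times[n_j]$ with $x^i_{\mathfrak s}x^j_{\mathfrak t}=x^j_{\mathfrak t'}x^i_{\mathfrak s'}$; (3) any two $\mu,\nu\in\mathbb F_\theta^+$ having a right common multiple have a unique right least common multiple, and it has degree $d(\mu)\vee d(\nu)$; (4) $\mathbb F_\theta^+$ is right LCM.
   Context: $[m]=\{0,\dots,m-1\}$. $\mathbb F_\theta^+$ is the monoid generated by $x^i_{\mathfrak s}$ ($1\le i\le k$, $\mathfrak s\in[n_i]$) subject to $x^i_{\mathfrak s}x^j_{\mathfrak t}=x^j_{\mathfrak t'}x^i_{\mathfrak s'}$ for $i<j$ whenever $\mathfrak s+\mathfrak tn_i=\mathfrak t'+\mathfrak s'n_j$ ($\mathfrak s,\mathfrak s'\in[n_i]$, $\mathfrak t,\mathfrak t'\in[n_j]$); it is a single-vertex $k$-graph with degree map $d(x^i_{\mathfrak s})=e_i\in\mathbb N^k$ (unique factorization holds). $p$ is a right multiple of $q$ if $p=qr$ for some $r$; a monoid is right LCM if any two elements having a right common multiple have a right least common multiple (a common right multiple of which every common right multiple is a right multiple). *)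

theory Defs
  imports Main "HOL-Library.Extended_Nat"
begin

definition color :: "enat \<Rightarrow> nat \<Rightarrow> bool" where
  "color k i \<longleftrightarrow> 1 \<le> i \<and> enat i \<le> k"

text \<open>A generator x^i_s is encoded as the pair (i, s); words are lists of generators.\<close>
definition valid_word :: "enat \<Rightarrow> (nat \<Rightarrow> nat) \<Rightarrow> (nat \<times> nat) list \<Rightarrow> bool" where
  "valid_word k n w \<longleftrightarrow> (\<forall>(i, s) \<in> set w. color k i \<and> s < n i)"

definition basic_rel :: "enat \<Rightarrow> (nat \<Rightarrow> nat) \<Rightarrow> (nat \<times> nat) list \<Rightarrow> (nat \<times> nat) list \<Rightarrow> bool" where
  "basic_rel k n a b \<longleftrightarrow> (\<exists>i j s t t' s'. color k i \<and> color k j \<and> i < j \<and>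
      s < n i \<and> t < n j \<and> t' < n j \<and> s' < n i \<and> s + t * n i = t' + s' * n j \<and>
      a = [(i, s), (j, t)] \<and> b = [(j, t'), (i, s')])"

text \<open>Equality in the monoid F_theta^+: the congruence on words generated by the relations.\<close>
inductive Feq :: "enat \<Rightarrow> (nat \<Rightarrow> nat) \<Rightarrow> (nat \<times> nat) list \<Rightarrow> (nat \<times> nat) list \<Rightarrow> bool"
  for k n where
  Feq_refl: "Feq k n w w"
| Feq_sym: "Feq k n u w \<Longrightarrow> Feq k n w u"
| Feq_trans: "Feq k n u v \<Longrightarrow> Feq k n v w \<Longrightarrow> Feq k n u w"
| Feq_step: "basic_rel k n a b \<Longrightarrow> Feq k n (u @ a @ v) (u @ b @ v)"

definition deg :: "(nat \<times> nat) list \<Rightarrow> nat \<Rightarrow> nat" where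
  "deg w = (\<lambda>i. length (filter (\<lambda>g. fst g = i) w))"

definition right_mult :: "enat \<Rightarrow> (nat \<Rightarrow> nat) \<Rightarrow> (nat \<times> nat) list \<Rightarrow> (nat \<times> nat) list \<Rightarrow> bool" where
  "right_mult k n p q \<longleftrightarrow> (\<exists>r. valid_word k n r \<and> Feq k n p (q @ r))"

definition common_right_mult :: "enat \<Rightarrow> (nat \<Rightarrow> nat) \<Rightarrow> (nat \<times> nat) list \<Rightarrow> (nat \<times> nat) list \<Rightarrow> (nat \<times> nat) list \<Rightarrow> bool" where
  "common_right_mult k n c p q \<longleftrightarrow> valid_word k n c \<and> right_mult k n c p \<and> right_mult k n c q"

definition is_right_lcm :: "enat \<Rightarrow> (nat \<Rightarrow> nat) \<Rightarrow> (nat \<times> nat) list \<Rightarrow> (nat \<times> nat) list \<Rightarrow> (nat \<times> nat) list \<Rightarrow> bool" where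
  "is_right_lcm k n l p q \<longleftrightarrow> common_right_mult k n l p q \<and>
     (\<forall>c. common_right_mult k n c p q \<longrightarrow> right_mult k n c l)"

definition right_LCM_monoid :: "enat \<Rightarrow> (nat \<Rightarrow> nat) \<Rightarrow> bool" where
  "right_LCM_monoid k n \<longleftrightarrow> (\<forall>p q. valid_word k n p \<and> valid_word k n q \<and>
      (\<exists>c. common_right_mult k n c p q) \<longrightarrow> (\<exists>l. is_right_lcm k n l p q))"

end

theory Submission
  imports Defs "HOL-Number_Theory.Cong"
begin

text \<open>The defining relations preserve the degree of a word and its value as a mixed-radix number,
i.e. the position to which it moves the odometer. Conversely, every letter can be commuted to the
front of a word, so two valid words with the same degree and value are equal in the monoid. Hence
\<open>p\<close> is a right multiple of \<open>q\<close> iff \<open>d(q) \<le> d(p)\<close> and the values agree modulo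
\<open>N(q) = \<Prod> n_i^d(q)_i\<close>, and the theorem becomes arithmetic. Condition (2) says that
\<open>t \<mapsto> s + t n_i\<close> permutes the residues modulo \<open>n_j\<close>, which is coprimality. Under coprimality,
\<open>N\<close> of degree \<open>d(\<mu>) \<or> d(\<nu>)\<close> is \<open>lcm (N(\<mu>)) (N(\<nu>))\<close>, so the prefix of that degree of any
common multiple is a right lcm. If instead \<open>n_i b = n_j a\<close> with \<open>0 < b < n_j\<close>, then
\<open>x^i_0 x^j_0\<close> and \<open>x^i_0 x^j_b\<close> are distinct common multiples of \<open>x^i_0\<close> and \<open>x^j_0\<close> of least
degree, so these two have no right lcm.\<close>

text \<open>\<open>x^i1_s1 \<dots> x^im_sm\<close> has value \<open>s1 + n_i1 (s2 + n_i2 (\<dots>))\<close>; the relation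
\<open>s + t n_i = t' + s' n_j\<close> is exactly the invariance of this value.\<close>

fun radix_val :: "(nat \<Rightarrow> nat) \<Rightarrow> (nat \<times> nat) list \<Rightarrow> nat" where
  "radix_val n [] = 0"
| "radix_val n ((i, s) # w) = s + n i * radix_val n w"

definition radix_prod :: "(nat \<Rightarrow> nat) \<Rightarrow> (nat \<times> nat) list \<Rightarrow> nat" where
  "radix_prod n w = prod_list (map (\<lambda>g. n (fst g)) w)"

lemma radix_prod_Nil [simp]: "radix_prod n [] = 1"
  by (simp add: radix_prod_def)

lemma radix_prod_Cons [simp]: "radix_prod n (g # w) = n (fst g) * radix_prod n w"
  by (simp add: radix_prod_def)

lemma radix_prod_append: "radix_prod n (u @ v) = radix_prod n u * radix_prod n v"
  by (simp add: radix_prod_def)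

lemma radix_val_append: "radix_val n (u @ v) = radix_val n u + radix_prod n u * radix_val n v"
  by (induction u) (auto simp: algebra_simps)

lemma radix_val_less_radix_prod:
  "\<forall>(i, s) \<in> set w. s < n i \<Longrightarrow> radix_val n w < radix_prod n w"
proof (induction w)
  case (Cons g w)
  obtain i s where g: "g = (i, s)" by force
  with Cons have "s + n i * radix_val n w < n i * (radix_val n w + 1)" by simp
  also have "\<dots> \<le> n i * radix_prod n w" using Cons by (intro mult_le_mono2) simp
  finally show ?case using g by simp
qed simp

lemma deg_Nil [simp]: "deg [] = (\<lambda>_. 0)"
  by (simp add: deg_def)

lemma deg_Cons: "deg (g # w) = (\<lambda>i. (if fst g = i then 1 else 0) + deg w i)"
  by (auto simp: deg_def)

lemma deg_append: "deg (u @ v) = (\<lambda>i. deg u i + deg v i)"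
  by (simp add: deg_def)

lemma deg_pos_iff_mem: "0 < deg w i \<longleftrightarrow> (\<exists>s. (i, s) \<in> set w)"
  by (force simp: deg_def filter_empty_conv)

lemma radix_prod_eq_prod_deg:
  assumes "finite S" "fst ` set w \<subseteq> S"
  shows "radix_prod n w = (\<Prod>i\<in>S. n i ^ deg w i)"
  using assms(2)
proof (induction w)
  case (Cons g w)
  have "(\<Prod>i\<in>S. n i ^ deg (g # w) i)
      = (\<Prod>i\<in>S. if i = fst g then n i else 1) * (\<Prod>i\<in>S. n i ^ deg w i)"
    by (simp add: deg_Cons power_add prod.distrib[symmetric]) (rule prod.cong; simp)
  also have "(\<Prod>i\<in>S. if i = fst g then n i else 1) = n (fst g)"
    using Cons.prems assms(1) by (simp add: prod.delta)
  finally show ?case using Cons by simp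
qed simp

lemma radix_prod_dvd_if_deg_le:
  assumes "\<forall>i. deg u i \<le> deg v i"
  shows "radix_prod n u dvd radix_prod n v"
proof -
  let ?S = "fst ` set u \<union> fst ` set v"
  show ?thesis
    using assms radix_prod_eq_prod_deg[of ?S u n] radix_prod_eq_prod_deg[of ?S v n]
    by (auto intro!: prod_dvd_prod le_imp_power_dvd)
qed

lemma radix_prod_eq_if_deg_eq: "deg u = deg v \<Longrightarrow> radix_prod n u = radix_prod n v"
  by (simp add: radix_prod_dvd_if_deg_le dvd_antisym)

lemma valid_word_Nil [simp]: "valid_word k n []"
  by (simp add: valid_word_def)

lemma valid_word_Cons: "valid_word k n ((i, s) # w) \<longleftrightarrow> color k i \<and> s < n i \<and> valid_word k n w"
  by (simp add: valid_word_def)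

lemma radix_val_less_radix_prod_valid: "valid_word k n w \<Longrightarrow> radix_val n w < radix_prod n w"
  by (rule radix_val_less_radix_prod) (auto simp: valid_word_def)

lemma Feq_invariants:
  "Feq k n u v \<Longrightarrow> deg u = deg v \<and> radix_val n u = radix_val n v \<and> length u = length v"
proof (induction rule: Feq.induct)
  case (Feq_step a b u v)
  then have "deg a = deg b \<and> radix_val n a = radix_val n b \<and> radix_prod n a = radix_prod n b
      \<and> length a = length b"
    by (auto simp: basic_rel_def deg_Cons algebra_simps)
  then show ?case by (simp add: deg_append radix_val_append radix_prod_append)
qed auto

declare Feq_trans [trans]

lemma Feq_append_cong: "Feq k n u v \<Longrightarrow> Feq k n (p @ u @ q) (p @ v @ q)"
proof (induction rule: Feq.induct)
  case (Feq_step a b u v)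
  then show ?case using Feq.Feq_step[of k n a b "p @ u" "v @ q"] by simp
qed (auto intro: Feq.intros)

lemma Feq_Cons_cong: "Feq k n u v \<Longrightarrow> Feq k n (g # u) (g # v)"
  using Feq_append_cong[of k n u v "[g]" "[]"] by simp

lemma Feq_append_right_cong: "Feq k n u v \<Longrightarrow> Feq k n (u @ q) (v @ q)"
  using Feq_append_cong[of k n u v "[]" q] by simp

lemma mixed_radix_swap:
  fixes p q x y :: nat
  assumes "0 < q" "x < p" "y < q"
  shows "\<exists>y' x'. y' < q \<and> x' < p \<and> x + p * y = y' + q * x'"
proof -
  define z where "z = x + p * y"
  have "z < p * (y + 1)" using assms by (simp add: z_def)
  also have "\<dots> \<le> p * q" using assms by (intro mult_le_mono2) simp
  finally have "z div q < p" using assms by (simp add: less_mult_imp_div_less)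
  moreover have "z = z mod q + q * (z div q)" by simp
  ultimately show ?thesis using assms unfolding z_def by (metis mod_less_divisor)
qed

lemma coprime_mixed_radix_swap_unique:
  fixes p q s t' :: nat
  assumes "coprime p q" "s < p" "t' < q"
  shows "\<exists>!st. fst st < p \<and> snd st < q \<and> s + p * snd st = t' + q * fst st"
proof -
  define f where "f t = (s + p * t) mod q" for t
  have inj: "inj_on f {..<q}"
  proof (rule inj_onI)
    fix t1 t2 assume t12: "t1 \<in> {..<q}" "t2 \<in> {..<q}" and "f t1 = f t2"
    then have "[s + p * t1 = s + p * t2] (mod q)" by (simp add: f_def cong_def)
    then have "[t1 = t2] (mod q)" using assms(1) by (simp add: cong_add_lcancel_nat cong_mult_lcancel_nat)
    then show "t1 = t2" using t12 by (auto intro: cong_less_imp_eq_nat)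
  qed
  have "f ` {..<q} = {..<q}"
    using inj assms(3) by (intro endo_inj_surj) (auto simp: f_def)
  then obtain t where t: "t < q" "f t = t'" using assms(3) by (metis imageE lessThan_iff)
  then obtain s' t'' where "t'' < q" "s' < p" and eq: "s + p * t = t'' + q * s'"
    using mixed_radix_swap[of q s p t] assms(2) by auto
  then have "t'' = t'" using t by (simp add: f_def)
  show ?thesis
  proof (rule ex1I[of _ "(s', t)"])
    show "fst (s', t) < p \<and> snd (s', t) < q \<and> s + p * snd (s', t) = t' + q * fst (s', t)"
      using \<open>s' < p\<close> t eq \<open>t'' = t'\<close> by simp
  next
    fix st assume st: "fst st < p \<and> snd st < q \<and> s + p * snd st = t' + q * fst st"
    then have "f (snd st) = t'" using assms(3) by (simp add: f_def)
    then have "snd st = t" using inj t st by (auto dest: inj_onD)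
    then show "st = (s', t)" using eq st \<open>t'' = t'\<close> t by (simp add: prod_eq_iff)
  qed
qed

lemma not_coprime_imp_cross_multiple:
  fixes p q :: nat
  assumes "\<not> coprime p q" "0 < p" "0 < q"
  shows "\<exists>a b. 0 < a \<and> a < p \<and> 0 < b \<and> b < q \<and> p * b = q * a"
proof -
  define g where "g = gcd p q"
  have "1 < g" using assms by (simp add: g_def coprime_iff_gcd_eq_1 nat_neq_iff)
  obtain a b where "p = g * a" "q = g * b" unfolding g_def by (metis gcd_dvd1 gcd_dvd2 dvdE)
  then show ?thesis using \<open>1 < g\<close> assms by (intro exI[of _ a] exI[of _ b]) auto
qed

lemma radix_prod_max_deg_split:
  assumes coprime: "\<And>i j. color k i \<Longrightarrow> color k j \<Longrightarrow> i \<noteq> j \<Longrightarrow> coprime (n i) (n j)"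
    and valid: "valid_word k n \<mu>" "valid_word k n \<nu>" "valid_word k n l"
    and deg_l: "deg l = (\<lambda>i. max (deg \<mu> i) (deg \<nu> i))"
  shows "\<exists>X Y. X dvd radix_prod n \<mu> \<and> Y dvd radix_prod n \<nu> \<and> coprime X Y \<and> radix_prod n l = X * Y"
proof -
  define S where "S = fst ` set \<mu> \<union> fst ` set \<nu> \<union> fst ` set l"
  define A where "A = {i \<in> S. deg \<nu> i \<le> deg \<mu> i}"
  define X where "X = (\<Prod>i\<in>A. n i ^ deg \<mu> i)"
  define Y where "Y = (\<Prod>i\<in>S - A. n i ^ deg \<nu> i)"
  have S: "finite S" "A \<subseteq> S" by (auto simp: S_def A_def)
  have prod_S: "radix_prod n w = (\<Prod>i\<in>S. n i ^ deg w i)" if "w \<in> {\<mu>, \<nu>, l}" for w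
    using that S by (intro radix_prod_eq_prod_deg) (auto simp: S_def)
  have "X dvd radix_prod n \<mu>" "Y dvd radix_prod n \<nu>"
    unfolding X_def Y_def prod_S[of \<mu>, simplified] prod_S[of \<nu>, simplified]
    using S by (auto intro: prod_dvd_prod_subset)
  moreover have "coprime X Y" unfolding X_def Y_def
  proof (intro prod_coprime_left prod_coprime_right)
    fix i j assume "i \<in> A" "j \<in> S - A"
    then have "coprime (n i) (n j)"
      using valid by (intro coprime) (auto simp: A_def S_def valid_word_def)
    then show "coprime (n i ^ deg \<mu> i) (n j ^ deg \<nu> j)" by simp
  qed
  moreover have "radix_prod n l = X * Y"
  proof -
    have "(\<Prod>i\<in>A. n i ^ deg l i) = X" unfolding X_def
      by (rule prod.cong) (auto simp: deg_l A_def)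
    moreover have "(\<Prod>i\<in>S - A. n i ^ deg l i) = Y" unfolding Y_def
      by (rule prod.cong) (auto simp: deg_l A_def)
    ultimately show ?thesis
      unfolding prod_S[of l, simplified] prod.subset_diff[OF S(2) S(1)] by simp
  qed
  ultimately show ?thesis by blast
qed

lemma radix_prod_max_deg_eq_lcm:
  assumes coprime: "\<And>i j. color k i \<Longrightarrow> color k j \<Longrightarrow> i \<noteq> j \<Longrightarrow> coprime (n i) (n j)"
    and valid: "valid_word k n \<mu>" "valid_word k n \<nu>" "valid_word k n l"
    and deg_l: "deg l = (\<lambda>i. max (deg \<mu> i) (deg \<nu> i))"
  shows "radix_prod n l = lcm (radix_prod n \<mu>) (radix_prod n \<nu>)"
proof (rule dvd_antisym)
  obtain X Y where XY: "X dvd radix_prod n \<mu>" "Y dvd radix_prod n \<nu>" "coprime X Y"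
    "radix_prod n l = X * Y"
    using radix_prod_max_deg_split[OF assms] by blast
  then show "radix_prod n l dvd lcm (radix_prod n \<mu>) (radix_prod n \<nu>)"
    by (metis divides_mult dvd_lcmI1 dvd_lcmI2)
  show "lcm (radix_prod n \<mu>) (radix_prod n \<nu>) dvd radix_prod n l"
    using deg_l by (simp add: radix_prod_dvd_if_deg_le)
qed

locale odometer =
  fixes k :: enat and n :: "nat \<Rightarrow> nat"
  assumes n_pos: "color k i \<Longrightarrow> 0 < n i"
begin

lemma Feq_swap_letters:
  assumes "color k a" "color k b" "a \<noteq> b" "x < n a" "y < n b"
  shows "\<exists>y' x'. y' < n b \<and> x' < n a \<and> Feq k n [(a, x), (b, y)] [(b, y'), (a, x')]"
proof -
  obtain y' x' where digits: "y' < n b" "x' < n a" "x + n a * y = y' + n b * x'"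
    using mixed_radix_swap[of "n b" x "n a" y] assms n_pos by auto
  have "basic_rel k n [(a, x), (b, y)] [(b, y'), (a, x')] \<or>
        basic_rel k n [(b, y'), (a, x')] [(a, x), (b, y)]"
    using assms digits by (cases "a < b") (auto simp: basic_rel_def algebra_simps)
  then have "Feq k n [(a, x), (b, y)] [(b, y'), (a, x')]"
    using Feq_step[of k n _ _ "[]" "[]"] by (auto intro: Feq_sym)
  with digits show ?thesis by blast
qed

lemma Feq_move_to_front:
  assumes "valid_word k n v" "(i, x) \<in> set v"
  shows "\<exists>x' v'. x' < n i \<and> valid_word k n v' \<and> Feq k n v ((i, x') # v')"
  using assms
proof (induction v)
  case (Cons g v)
  obtain c y where g: "g = (c, y)" by force
  show ?case
  proof (cases "c = i")
    case True
    then show ?thesis using Cons.prems g by (auto simp: valid_word_Cons intro: Feq_refl)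
  next
    case False
    have cy: "color k c" "y < n c" "valid_word k n v" and ci: "color k i"
      using Cons.prems g by (auto simp: valid_word_Cons valid_word_def)
    obtain x' v' where IH: "x' < n i" "valid_word k n v'" "Feq k n v ((i, x') # v')"
      using Cons False g cy by auto
    obtain x'' y' where sw: "x'' < n i" "y' < n c" "Feq k n [(c, y), (i, x')] [(i, x''), (c, y')]"
      using Feq_swap_letters[OF cy(1) ci False cy(2) IH(1)] by blast
    have "Feq k n (g # v) ((c, y) # (i, x') # v')"
      using g Feq_Cons_cong[OF IH(3)] by simp
    also have "Feq k n \<dots> ((i, x'') # (c, y') # v')"
      using Feq_append_right_cong[OF sw(3), of v'] by simp
    finally have "Feq k n (g # v) ((i, x'') # (c, y') # v')" .
    moreover have "valid_word k n ((c, y') # v')" using sw IH cy by (simp add: valid_word_Cons)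
    ultimately show ?thesis using sw by blast
  qed
qed simp

lemma Feq_if_deg_radix_val_eq:
  assumes "valid_word k n u" "valid_word k n v" "deg u = deg v" "radix_val n u = radix_val n v"
  shows "Feq k n u v"
  using assms
proof (induction u arbitrary: v)
  case Nil
  then have "v = []"
    by (metis deg_pos_iff_mem deg_Nil less_irrefl list.set_intros(1) surj_pair neq_Nil_conv)
  then show ?case by (simp add: Feq_refl)
next
  case (Cons g u)
  obtain i s where g: "g = (i, s)" by force
  have su: "s < n i" "valid_word k n u" "color k i" using Cons.prems g by (auto simp: valid_word_Cons)
  have "0 < deg v i" using Cons.prems(3) g by (metis deg_pos_iff_mem list.set_intros(1))
  then obtain x' v' where v': "x' < n i" "valid_word k n v'" "Feq k n v ((i, x') # v')"
    using Feq_move_to_front Cons.prems(2) deg_pos_iff_mem by blast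
  have eq: "s + n i * radix_val n u = x' + n i * radix_val n v'"
    using Feq_invariants[OF v'(3)] Cons.prems(4) g by simp
  then have "s = x'" using su v' by (metis mod_mult_self2 mod_less)
  then have "radix_val n u = radix_val n v'" using eq n_pos[OF su(3)] by simp
  moreover have "deg u = deg v'"
    using Feq_invariants[OF v'(3)] Cons.prems(3) g by (auto simp: deg_Cons fun_eq_iff)
  ultimately have "Feq k n u v'" using Cons.IH su v' by blast
  then have "Feq k n (g # u) ((i, x') # v')" using Feq_Cons_cong g \<open>s = x'\<close> by blast
  then show ?case using v'(3) by (blast intro: Feq_sym Feq_trans)
qed

theorem Feq_iff_deg_radix_val:
  assumes "valid_word k n u" "valid_word k n v"
  shows "Feq k n u v \<longleftrightarrow> deg u = deg v \<and> radix_val n u = radix_val n v"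
  using Feq_invariants Feq_if_deg_radix_val_eq assms by blast

lemma exists_prefix_of_deg:
  assumes "valid_word k n p" "\<forall>i. d i \<le> deg p i"
  shows "\<exists>q r. valid_word k n q \<and> valid_word k n r \<and> deg q = d \<and> Feq k n p (q @ r)"
  using assms
proof (induction "length p" arbitrary: p d rule: less_induct)
  case less
  show ?case
  proof (cases "d = (\<lambda>_. 0)")
    case True
    then show ?thesis using less.prems(1)
      by (intro exI[of _ "[]"] exI[of _ p]) (auto intro: Feq_refl)
  next
    case False
    then obtain i where "0 < d i" by auto
    then have "0 < deg p i" using less.prems(2) by (metis less_le_trans)
    then obtain x where x: "(i, x) \<in> set p" by (auto simp: deg_pos_iff_mem)
    then have "color k i" using less.prems(1) by (auto simp: valid_word_def)
    obtain x' p' where p': "x' < n i" "valid_word k n p'" "Feq k n p ((i, x') # p')"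
      using Feq_move_to_front[OF less.prems(1) x] by blast
    have inv: "deg p = deg ((i, x') # p')" "length p = Suc (length p')"
      using Feq_invariants[OF p'(3)] by auto
    have "(d(i := d i - 1)) j \<le> deg p' j" for j
      using less.prems(2)[rule_format, of j] by (auto simp: inv deg_Cons)
    then obtain q r where qr: "valid_word k n q" "valid_word k n r" "deg q = d(i := d i - 1)"
      "Feq k n p' (q @ r)" using less.hyps[of p' "d(i := d i - 1)"] inv p' by auto
    have "deg ((i, x') # q) = d" using qr(3) \<open>0 < d i\<close> by (auto simp: deg_Cons fun_eq_iff)
    moreover have "Feq k n p ((i, x') # q @ r)"
      using p'(3) Feq_Cons_cong[OF qr(4)] by (rule Feq_trans)
    moreover have "valid_word k n ((i, x') # q)" using qr p' \<open>color k i\<close> by (simp add: valid_word_Cons)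
    ultimately show ?thesis using qr(2) by (metis append_Cons)
  qed
qed

theorem right_mult_iff:
  assumes "valid_word k n p" "valid_word k n q"
  shows "right_mult k n p q \<longleftrightarrow>
    (\<forall>i. deg q i \<le> deg p i) \<and> radix_val n p mod radix_prod n q = radix_val n q"
proof
  assume "right_mult k n p q"
  then obtain r where "Feq k n p (q @ r)" by (auto simp: right_mult_def)
  then show "(\<forall>i. deg q i \<le> deg p i) \<and> radix_val n p mod radix_prod n q = radix_val n q"
    using Feq_invariants radix_val_less_radix_prod_valid[OF assms(2)]
    by (simp add: deg_append radix_val_append)
next
  assume h: "(\<forall>i. deg q i \<le> deg p i) \<and> radix_val n p mod radix_prod n q = radix_val n q"
  with exists_prefix_of_deg[OF assms(1), of "deg q"] obtain q' r where qr: "valid_word k n q'"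
    "valid_word k n r" "deg q' = deg q" "Feq k n p (q' @ r)" by blast
  have "radix_val n p = radix_val n q' + radix_prod n q * radix_val n r"
    using Feq_invariants[OF qr(4)] radix_prod_eq_if_deg_eq[OF qr(3)] by (simp add: radix_val_append)
  then have "radix_val n q' = radix_val n q"
    using h radix_val_less_radix_prod_valid[OF qr(1)] radix_prod_eq_if_deg_eq[OF qr(3)] by simp
  then have "Feq k n q' q" using Feq_if_deg_radix_val_eq qr assms by blast
  then have "Feq k n p (q @ r)" using qr(4) Feq_append_right_cong by (blast intro: Feq_trans)
  then show "right_mult k n p q" using qr by (auto simp: right_mult_def)
qed

lemma Feq_if_right_mult_both_ways:
  assumes "valid_word k n p" "valid_word k n q" "right_mult k n p q" "right_mult k n q p"
  shows "Feq k n p q"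
proof -
  have deg: "deg p = deg q"
  proof
    fix i show "deg p i = deg q i" using assms by (meson le_antisym right_mult_iff)
  qed
  have "radix_val n p mod radix_prod n q = radix_val n q"
    using assms(1-3) right_mult_iff by blast
  then have "radix_val n p = radix_val n q"
    using radix_val_less_radix_prod_valid[OF assms(1)] radix_prod_eq_if_deg_eq[OF deg] by simp
  with deg show ?thesis using Feq_if_deg_radix_val_eq assms by blast
qed

lemma Feq_two_letters_iff:
  assumes "color k i" "color k j" "s < n i" "t < n j" "t' < n j" "s' < n i"
  shows "Feq k n [(i, s), (j, t)] [(j, t'), (i, s')] \<longleftrightarrow> s + n i * t = t' + n j * s'"
  using assms by (subst Feq_iff_deg_radix_val) (auto simp: valid_word_Cons deg_Cons)

lemma right_mult_iff_cong:
  assumes "valid_word k n p" "valid_word k n q"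
  shows "right_mult k n p q \<longleftrightarrow>
    (\<forall>i. deg q i \<le> deg p i) \<and> [radix_val n p = radix_val n q] (mod radix_prod n q)"
  using right_mult_iff[OF assms] radix_val_less_radix_prod_valid[OF assms(2)]
  by (simp add: cong_def)

lemma coprime_imp_unique_swap:
  assumes "color k i" "color k j" "coprime (n i) (n j)" "s < n i" "t' < n j"
  shows "\<exists>!st. fst st < n i \<and> snd st < n j \<and> Feq k n [(i, s), (j, snd st)] [(j, t'), (i, fst st)]"
proof -
  have swap_iff: "fst st < n i \<and> snd st < n j \<and> Feq k n [(i, s), (j, snd st)] [(j, t'), (i, fst st)]
    \<longleftrightarrow> fst st < n i \<and> snd st < n j \<and> s + n i * snd st = t' + n j * fst st" for st
    using Feq_two_letters_iff[OF assms(1,2,4) _ assms(5)] by blast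
  show ?thesis unfolding swap_iff by (rule coprime_mixed_radix_swap_unique[OF assms(3-5)])
qed

lemma unique_swap_imp_coprime:
  assumes "color k i" "color k j"
    and unique: "\<exists>!st. fst st < n i \<and> snd st < n j \<and>
      Feq k n [(i, 0), (j, snd st)] [(j, 0), (i, fst st)]"
  shows "coprime (n i) (n j)"
proof (rule ccontr)
  assume "\<not> coprime (n i) (n j)"
  then obtain a b where ab: "0 < a" "a < n i" "0 < b" "b < n j" "n i * b = n j * a"
    using not_coprime_imp_cross_multiple n_pos[OF assms(1)] n_pos[OF assms(2)] by blast
  from unique obtain st where st: "\<And>st'. fst st' < n i \<and> snd st' < n j \<and>
      Feq k n [(i, 0), (j, snd st')] [(j, 0), (i, fst st')] \<Longrightarrow> st' = st"
    by (auto elim: ex1E)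
  have "Feq k n [(i, 0), (j, 0)] [(j, 0), (i, 0)]" "Feq k n [(i, 0), (j, b)] [(j, 0), (i, a)]"
    using Feq_two_letters_iff[OF assms(1,2)] ab by simp_all
  then have "(0, 0) = st" "(a, b) = st" using ab by (auto intro!: st)
  with \<open>0 < a\<close> show False by (metis fst_conv less_irrefl)
qed

lemma right_lcm_exists_if_coprime:
  assumes coprime: "\<And>i j. color k i \<Longrightarrow> color k j \<Longrightarrow> i \<noteq> j \<Longrightarrow> coprime (n i) (n j)"
    and valid: "valid_word k n \<mu>" "valid_word k n \<nu>"
    and common: "common_right_mult k n c \<mu> \<nu>"
  shows "\<exists>l. is_right_lcm k n l \<mu> \<nu> \<and> deg l = (\<lambda>i. max (deg \<mu> i) (deg \<nu> i))"
proof -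
  have c: "valid_word k n c" "right_mult k n c \<mu>" "right_mult k n c \<nu>"
    using common by (auto simp: common_right_mult_def)
  have "\<forall>i. max (deg \<mu> i) (deg \<nu> i) \<le> deg c i"
    using c valid by (simp add: right_mult_iff)
  from exists_prefix_of_deg[OF c(1) this] obtain l r where l: "valid_word k n l" "valid_word k n r"
      "deg l = (\<lambda>i. max (deg \<mu> i) (deg \<nu> i))" "Feq k n c (l @ r)"
    by blast
  have deg_le: "\<forall>i. deg \<mu> i \<le> deg l i" "\<forall>i. deg \<nu> i \<le> deg l i" using l(3) by simp_all
  have "right_mult k n c l" using l by (auto simp: right_mult_def)
  then have "[radix_val n l = radix_val n c] (mod radix_prod n l)"
    using c(1) l(1) by (simp add: right_mult_iff_cong cong_sym)
  then have "[radix_val n l = radix_val n c] (mod radix_prod n w)" if "w \<in> {\<mu>, \<nu>}" for w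
    using that deg_le by (auto intro: cong_dvd_modulus_nat radix_prod_dvd_if_deg_le)
  then have common_l: "common_right_mult k n l \<mu> \<nu>"
    using c valid l(1) deg_le by (auto simp: common_right_mult_def right_mult_iff_cong intro: cong_trans)
  have "right_mult k n c' l" if "common_right_mult k n c' \<mu> \<nu>" for c'
  proof -
    have c': "valid_word k n c'" "right_mult k n c' \<mu>" "right_mult k n c' \<nu>"
      using that by (auto simp: common_right_mult_def)
    have "[radix_val n c' = radix_val n l] (mod radix_prod n w)" if "w \<in> {\<mu>, \<nu>}" for w
      using that c' common_l valid l(1)
      by (auto simp: common_right_mult_def right_mult_iff_cong intro: cong_trans cong_sym)
    then have "[radix_val n c' = radix_val n l] (mod radix_prod n l)"
      using radix_prod_max_deg_eq_lcm[OF coprime valid l(1) l(3)] by (simp add: cong_cong_lcm_nat)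
    moreover have "\<forall>i. deg l i \<le> deg c' i" using c' valid l(3) by (simp add: right_mult_iff)
    ultimately show ?thesis using c'(1) l(1) by (simp add: right_mult_iff_cong)
  qed
  with common_l l(3) show ?thesis by (auto simp: is_right_lcm_def)
qed

lemma right_lcm_unique:
  assumes "is_right_lcm k n l \<mu> \<nu>" "is_right_lcm k n l' \<mu> \<nu>"
  shows "Feq k n l' l"
  using assms by (intro Feq_if_right_mult_both_ways) (auto simp: is_right_lcm_def common_right_mult_def)

lemma right_LCM_monoid_imp_coprime:
  assumes "right_LCM_monoid k n" "color k i" "color k j" "i \<noteq> j"
  shows "coprime (n i) (n j)"
proof (rule ccontr)
  assume "\<not> coprime (n i) (n j)"
  then obtain a b where ab: "0 < a" "a < n i" "0 < b" "b < n j" "n i * b = n j * a"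
    using not_coprime_imp_cross_multiple n_pos[OF assms(2)] n_pos[OF assms(3)] by blast
  define \<mu> \<nu> c c' where "\<mu> = [(i, 0::nat)]" and "\<nu> = [(j, 0::nat)]"
    and "c = [(i, 0::nat), (j, 0)]" and "c' = [(i, 0::nat), (j, b)]"
  have valid: "valid_word k n \<mu>" "valid_word k n \<nu>" "valid_word k n c" "valid_word k n c'"
    using assms ab by (auto simp: \<mu>_def \<nu>_def c_def c'_def valid_word_Cons)
  have "n i * b mod n j = 0" using ab(5) by simp
  then have "common_right_mult k n c \<mu> \<nu>" "common_right_mult k n c' \<mu> \<nu>"
    using valid ab(1-4)
    by (auto simp: common_right_mult_def right_mult_iff \<mu>_def \<nu>_def c_def c'_def deg_Cons)
  then obtain l where l: "is_right_lcm k n l \<mu> \<nu>"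
    using assms(1) valid by (auto simp: right_LCM_monoid_def)
  then have vl: "valid_word k n l" and
    "right_mult k n l \<mu>" "right_mult k n l \<nu>" "right_mult k n c l" "right_mult k n c' l"
    using \<open>common_right_mult k n c \<mu> \<nu>\<close> \<open>common_right_mult k n c' \<mu> \<nu>\<close>
    by (auto simp: is_right_lcm_def common_right_mult_def)
  then have "\<forall>x. deg \<mu> x \<le> deg l x" "\<forall>x. deg \<nu> x \<le> deg l x" "\<forall>x. deg l x \<le> deg c x"
    using valid vl by (simp_all add: right_mult_iff)
  then have "deg l x = deg c x" for x
    using assms(4) by (auto simp: \<mu>_def \<nu>_def c_def deg_Cons dest!: spec[of _ x] split: if_splits)
  then have "radix_prod n l = n i * n j"
    using radix_prod_eq_if_deg_eq[of l c n] by (simp add: c_def fun_eq_iff)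
  moreover have "radix_val n c mod radix_prod n l = radix_val n l"
    "radix_val n c' mod radix_prod n l = radix_val n l"
    using \<open>right_mult k n c l\<close> \<open>right_mult k n c' l\<close> valid vl by (simp_all add: right_mult_iff)
  moreover have "0 < n i * b" "n i * b < n i * n j" using ab by simp_all
  ultimately show False by (simp add: c_def c'_def)
qed

end

theorem mainTheorem5:
  fixes k :: enat and n :: "nat \<Rightarrow> nat"
  assumes "k \<ge> 1"
    and "\<forall>i. color k i \<longrightarrow> n i > 0"
  defines "P1 \<equiv> (\<forall>i j. color k i \<and> color k j \<and> i \<noteq> j \<longrightarrow> coprime (n i) (n j))"
    and "P2 \<equiv> (\<forall>i j s t'. color k i \<and> color k j \<and> i < j \<and> s < n i \<and> t' < n j \<longrightarrow>
               (\<exists>!st. fst st < n i \<and> snd st < n j \<and>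
                  Feq k n [(i, s), (j, snd st)] [(j, t'), (i, fst st)]))"
    and "P3 \<equiv> (\<forall>\<mu> \<nu>. valid_word k n \<mu> \<and> valid_word k n \<nu> \<and> (\<exists>c. common_right_mult k n c \<mu> \<nu>) \<longrightarrow>
               (\<exists>l. is_right_lcm k n l \<mu> \<nu> \<and> deg l = (\<lambda>i. max (deg \<mu> i) (deg \<nu> i)) \<and>
                   (\<forall>l'. is_right_lcm k n l' \<mu> \<nu> \<longrightarrow> Feq k n l' l)))"
    and "P4 \<equiv> right_LCM_monoid k n"
  shows "(P1 \<longleftrightarrow> P2) \<and> (P2 \<longleftrightarrow> P3) \<and> (P3 \<longleftrightarrow> P4)"
proof -
  interpret odometer k n using assms(2) by unfold_locales simp
  have "P1 \<Longrightarrow> P2" unfolding P1_def P2_def by (simp add: coprime_imp_unique_swap)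
  moreover have "P2 \<Longrightarrow> P1"
  proof -
    assume P2
    then have "coprime (n i) (n j)" if "color k i" "color k j" "i < j" for i j
      using that n_pos unfolding P2_def by (intro unique_swap_imp_coprime) auto
    then show P1 unfolding P1_def by (metis coprime_commute linorder_neqE_nat)
  qed
  moreover have "P1 \<Longrightarrow> P3"
    unfolding P1_def P3_def using right_lcm_exists_if_coprime right_lcm_unique by metis
  moreover have "P3 \<Longrightarrow> P4" unfolding P3_def P4_def right_LCM_monoid_def by blast
  moreover have "P4 \<Longrightarrow> P1" unfolding P1_def P4_def using right_LCM_monoid_imp_coprime by blast
  ultimately show ?thesis by blast
qed

end
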